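(* Let $G_1$ and $G_2$ be simple graphs with $|V(G_1)|=n$. Let $\alpha'(G_1)$ be the size of a maximum matching $M$ of $G_1$ and $l=n-2\alpha'(G_1)$ the number of $M$-unsaturated vertices of $G_1$. Then $n\,s(G_2)\le s(G_1\circ G_2)\le n\,s(G_2)+\alpha'(G_1)+l.$
   Context: A matching in a graph is a set of edges no two of which share a vertex; it is maximal if it is not properly contained in another matching, and maximum if it has the largest possible size. A vertex is $M$-unsaturated if no edge of $M$ is incident to it. The saturation number $s(G)$ is the minimum cardinality of a maximal matching of $G$. The corona $G_1\circ G_2$ is obtained by taking one copy of $G_1$ and $|V(G_1)|$ disjoint copies of $G_2$, and joining the $i$-th vertex of $G_1$ by an edge to every vertex of the $i$-th copy of $G_2$. *)

theory Defs
  imports Main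
begin

definition simple_graph :: "'a set \<Rightarrow> 'a set set \<Rightarrow> bool" where
  "simple_graph V E \<longleftrightarrow> finite V \<and>
     (\<forall>e\<in>E. \<exists>u v. u \<noteq> v \<and> u \<in> V \<and> v \<in> V \<and> e = {u, v})"

definition matching :: "'a set set \<Rightarrow> 'a set set \<Rightarrow> bool" where
  "matching E M \<longleftrightarrow> M \<subseteq> E \<and> (\<forall>e1\<in>M. \<forall>e2\<in>M. e1 \<noteq> e2 \<longrightarrow> e1 \<inter> e2 = {})"

definition maximal_matching :: "'a set set \<Rightarrow> 'a set set \<Rightarrow> bool" where
  "maximal_matching E M \<longleftrightarrow> matching E M \<and> (\<nexists>M'. matching E M' \<and> M \<subset> M')"

definition matching_number :: "'a set set \<Rightarrow> nat" where
  "matching_number E = Max (card ` {M. matching E M})"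

definition saturation_number :: "'a set set \<Rightarrow> nat" where
  "saturation_number E = Min (card ` {M. maximal_matching E M})"

text \<open>Corona G1 o G2: vertices Inl v (v in V1) and Inr (v, w) (the copy of w
in the v-th copy of G2).\<close>
definition corona_V :: "'a set \<Rightarrow> 'b set \<Rightarrow> ('a + 'a \<times> 'b) set" where
  "corona_V V1 V2 = Inl ` V1 \<union> (\<lambda>(v, w). Inr (v, w)) ` (V1 \<times> V2)"

definition corona_E :: "'a set \<Rightarrow> 'a set set \<Rightarrow> 'b set \<Rightarrow> 'b set set
    \<Rightarrow> ('a + 'a \<times> 'b) set set" where
  "corona_E V1 E1 V2 E2 =
     ((\<lambda>e. Inl ` e) ` E1)
   \<union> (\<Union>v\<in>V1. (\<lambda>e. (\<lambda>w. Inr (v, w)) ` e) ` E2)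
   \<union> {{Inl v, Inr (v, w)} | v w. v \<in> V1 \<and> w \<in> V2}"

end

theory Submission
  imports Defs
begin

text \<open>Both bounds rest on one estimate: if A is a matching and W is a vertex set meeting every
edge that misses all edges of A, then s(G) \<le> |A| + |W|, since A extends greedily to a maximal
matching and every added edge occupies its own vertex of W.

For the lower bound, a maximal matching of G1 \<circ> G2 restricts on the v-th copy of G2 to such a
pair: A consists of its edges inside the copy and W of the vertices joined to v by one of its
edges, so it has at least s(G2) edges in each of the n disjoint blocks. For the upper bound,
take A to be a maximum matching of G1 together with a minimum maximal matching in every copy
of G2, and W the l vertices of G1 left unsaturated.\<close>

lemma maximal_matching_iff:
  "maximal_matching E M \<longleftrightarrow> matching E M \<and> (\<forall>e\<in>E - M. e \<inter> \<Union>M \<noteq> {})"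
proof
  assume max: "maximal_matching E M"
  then have M: "matching E M" unfolding maximal_matching_def by blast
  have "e \<inter> \<Union>M \<noteq> {}" if e: "e \<in> E - M" for e
  proof
    assume "e \<inter> \<Union>M = {}"
    then have "\<forall>f\<in>M. e \<inter> f = {} \<and> f \<inter> e = {}" by blast
    then have "matching E (insert e M)" using M e unfolding matching_def by auto
    moreover have "M \<subset> insert e M" using e by blast
    ultimately show False using max unfolding maximal_matching_def by blast
  qed
  with M show "matching E M \<and> (\<forall>e\<in>E - M. e \<inter> \<Union>M \<noteq> {})" by blast
next
  assume M: "matching E M \<and> (\<forall>e\<in>E - M. e \<inter> \<Union>M \<noteq> {})"
  have "\<not> M \<subset> M'" if M': "matching E M'" for M'
  proof
    assume "M \<subset> M'"
    then obtain e where e: "e \<in> M'" "e \<notin> M" by blast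
    then have "e \<in> E" using M' unfolding matching_def by blast
    then obtain f where f: "f \<in> M" "e \<inter> f \<noteq> {}" using M e(2) by blast
    have "f \<in> M'" "e \<noteq> f" using f(1) e(2) \<open>M \<subset> M'\<close> by auto
    then show False using M' e(1) f(2) unfolding matching_def by blast
  qed
  with M show "maximal_matching E M" unfolding maximal_matching_def by blast
qed

lemma finite_matchings:
  assumes "finite E"
  shows "finite {M. matching E M}"
  using assms by (rule rev_finite_subset[OF finite_Pow_iff[THEN iffD2]]) (auto simp: matching_def)

lemma matching_extends_to_maximal:
  assumes "finite E" and "matching E A"
  shows "\<exists>M. maximal_matching E M \<and> A \<subseteq> M"
proof -
  obtain M where "matching E M" "A \<subseteq> M" and max: "\<And>M'. matching E M' \<Longrightarrow> M \<subseteq> M' \<Longrightarrow> M = M'"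
    using finite_has_maximal2[OF finite_matchings[OF assms(1)], of A] assms(2) by auto
  then have "maximal_matching E M" unfolding maximal_matching_def by blast
  with \<open>A \<subseteq> M\<close> show ?thesis by blast
qed

lemma maximum_matching_exists:
  assumes "finite E"
  shows "\<exists>M. maximal_matching E M \<and> card M = matching_number E"
proof -
  have "matching E {}" by (simp add: matching_def)
  then have "matching_number E \<in> card ` {M. matching E M}"
    unfolding matching_number_def using finite_matchings[OF assms] by (intro Max_in) auto
  then obtain M where M: "matching E M" "card M = matching_number E" by auto
  have "\<not> M \<subset> M'" if "matching E M'" for M'
  proof
    assume "M \<subset> M'"
    moreover have "finite M'" using that assms unfolding matching_def by (meson finite_subset)
    ultimately have "card M < card M'" by (rule psubset_card_mono[rotated])
    moreover have "card M' \<le> matching_number E"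
      unfolding matching_number_def using finite_matchings[OF assms] that by (intro Max_ge) auto
    ultimately show False using M(2) by simp
  qed
  then show ?thesis using M unfolding maximal_matching_def by blast
qed

lemma finite_maximal_matchings:
  assumes "finite E"
  shows "finite {M. maximal_matching E M}" and "{M. maximal_matching E M} \<noteq> {}"
  using finite_matchings[OF assms] maximum_matching_exists[OF assms]
  by (auto simp: maximal_matching_def elim: rev_finite_subset)

lemma saturation_number_attained:
  assumes "finite E"
  shows "\<exists>M. maximal_matching E M \<and> card M = saturation_number E"
proof -
  have "saturation_number E \<in> card ` {M. maximal_matching E M}"
    unfolding saturation_number_def using finite_maximal_matchings[OF assms] by (intro Min_in) auto
  then show ?thesis by auto
qed

lemma saturation_number_le:
  assumes "finite E" and "maximal_matching E M"
  shows "saturation_number E \<le> card M"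
  unfolding saturation_number_def using finite_maximal_matchings[OF assms(1)] assms(2)
  by (intro Min_le) auto

lemma saturation_number_le_card_add_cover:
  assumes "finite E" and A: "matching E A" and "finite W"
    and cover: "\<And>e. e \<in> E - A \<Longrightarrow> e \<inter> \<Union>A = {} \<Longrightarrow> e \<inter> W \<noteq> {}"
  shows "saturation_number E \<le> card A + card W"
proof -
  obtain M where M: "maximal_matching E M" "A \<subseteq> M"
    using matching_extends_to_maximal[OF assms(1) A] by blast
  then have "matching E M" unfolding maximal_matching_def by blast
  then have disj: "\<And>e f. e \<in> M \<Longrightarrow> f \<in> M \<Longrightarrow> e \<noteq> f \<Longrightarrow> e \<inter> f = {}"
    and "M \<subseteq> E" unfolding matching_def by blast+
  have "finite M" using \<open>M \<subseteq> E\<close> assms(1) by (rule finite_subset)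
  have hit: "\<exists>w. w \<in> e \<inter> W" if e: "e \<in> M - A" for e
    unfolding ex_in_conv
  proof (rule cover)
    show "e \<in> E - A" using e \<open>M \<subseteq> E\<close> by blast
    have "e \<inter> f = {}" if "f \<in> A" for f
      using disj[of e f] e that M(2) by blast
    then show "e \<inter> \<Union>A = {}" by blast
  qed
  define pick where "pick e = (SOME w. w \<in> e \<inter> W)" for e
  have pick: "pick e \<in> e \<inter> W" if "e \<in> M - A" for e
    unfolding pick_def using hit[OF that] by (rule someI_ex)
  have "inj_on pick (M - A)"
  proof (rule inj_onI)
    fix e f assume e: "e \<in> M - A" and f: "f \<in> M - A" and "pick e = pick f"
    then have "pick e \<in> e \<inter> f" using pick[OF e] pick[OF f] by simp
    then show "e = f" using disj[of e f] e f by blast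
  qed
  then have "card (M - A) \<le> card W"
    using pick \<open>finite W\<close> by (intro card_inj_on_le) auto
  moreover have "card M = card A + card (M - A)"
    using card_Diff_subset[OF finite_subset[OF M(2)] M(2)] card_mono[OF _ M(2)] \<open>finite M\<close>
    by simp
  moreover have "saturation_number E \<le> card M" using assms(1) M(1) by (rule saturation_number_le)
  ultimately show ?thesis by linarith
qed

lemma simple_graph_edgeD:
  assumes "simple_graph V E" and "e \<in> E"
  shows "e \<subseteq> V" and "card e = 2"
  using assms unfolding simple_graph_def by auto

lemma simple_graph_finite_edges:
  assumes "simple_graph V E"
  shows "finite E"
proof -
  have "E \<subseteq> Pow V" using simple_graph_edgeD(1)[OF assms] by blast
  moreover have "finite V" using assms unfolding simple_graph_def by blast
  ultimately show ?thesis by (meson finite_Pow_iff finite_subset)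
qed

lemma card_Union_matching:
  assumes "simple_graph V E" and "matching E M"
  shows "card (\<Union>M) = 2 * card M"
proof -
  have M: "M \<subseteq> E" "pairwise disjnt M"
    using assms(2) unfolding matching_def pairwise_def disjnt_def by blast+
  then have two: "card e = 2" if "e \<in> M" for e
    using simple_graph_edgeD(2)[OF assms(1)] that by blast
  have "card (\<Union>M) = sum card M"
    using M(2) by (rule card_Union_disjoint) (simp add: card_ge_0_finite two)
  also have "\<dots> = 2 * card M" using two by simp
  finally show ?thesis .
qed

abbreviation corona_copy :: "'a \<Rightarrow> 'b set \<Rightarrow> ('a + 'a \<times> 'b) set" where
  "corona_copy v e \<equiv> (\<lambda>w. Inr (v, w)) ` e"

abbreviation corona_spoke :: "'a \<Rightarrow> 'b \<Rightarrow> ('a + 'a \<times> 'b) set" where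
  "corona_spoke v w \<equiv> {Inl v, Inr (v, w)}"

lemma mem_corona_E:
  "g \<in> corona_E V1 E1 V2 E2 \<longleftrightarrow>
     (\<exists>f\<in>E1. g = Inl ` f) \<or> (\<exists>v\<in>V1. \<exists>f\<in>E2. g = corona_copy v f)
     \<or> (\<exists>v\<in>V1. \<exists>w\<in>V2. g = corona_spoke v w)"
  unfolding corona_E_def by blast

lemma finite_corona_E:
  assumes "finite V1" "finite E1" "finite V2" "finite E2"
  shows "finite (corona_E V1 E1 V2 E2)"
proof -
  have "{corona_spoke v w | v w. v \<in> V1 \<and> w \<in> V2} = (\<lambda>(v, w). corona_spoke v w) ` (V1 \<times> V2)"
    by auto
  then show ?thesis unfolding corona_E_def using assms by simp
qed

lemma matching_corona_lift:
  assumes "matching E1 M1" and "matching E2 S"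
  shows "matching (corona_E V1 E1 V2 E2) ((`) Inl ` M1 \<union> (\<Union>v\<in>V1. corona_copy v ` S))"
  unfolding matching_def
proof (intro conjI ballI impI)
  have "M1 \<subseteq> E1" and M1: "\<And>a b. a \<in> M1 \<Longrightarrow> b \<in> M1 \<Longrightarrow> a \<noteq> b \<Longrightarrow> a \<inter> b = {}"
    using assms(1) unfolding matching_def by auto
  have "S \<subseteq> E2" and S: "\<And>a b. a \<in> S \<Longrightarrow> b \<in> S \<Longrightarrow> a \<noteq> b \<Longrightarrow> a \<inter> b = {}"
    using assms(2) unfolding matching_def by auto
  show "(`) Inl ` M1 \<union> (\<Union>v\<in>V1. corona_copy v ` S) \<subseteq> corona_E V1 E1 V2 E2"
    using \<open>M1 \<subseteq> E1\<close> \<open>S \<subseteq> E2\<close> unfolding corona_E_def by blast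
  fix g h
  assume g: "g \<in> (`) Inl ` M1 \<union> (\<Union>v\<in>V1. corona_copy v ` S)"
    and h: "h \<in> (`) Inl ` M1 \<union> (\<Union>v\<in>V1. corona_copy v ` S)" and "g \<noteq> h"
  show "g \<inter> h = {}"
  proof (rule ccontr)
    assume "g \<inter> h \<noteq> {}"
    then obtain x where x: "x \<in> g" "x \<in> h" by blast
    show False
    proof (cases x)
      case (Inl y)
      then obtain a b where "a \<in> M1" "b \<in> M1" "g = Inl ` a" "h = Inl ` b" "y \<in> a" "y \<in> b"
        using g h x by auto
      then show False using M1[of a b] \<open>g \<noteq> h\<close> by blast
    next
      case (Inr p)
      then obtain v y where "x = Inr (v, y)" by (cases p) auto
      then obtain a b where "a \<in> S" "b \<in> S" "g = corona_copy v a" "h = corona_copy v b"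
          "y \<in> a" "y \<in> b"
        using g h x by auto
      then show False using S[of a b] \<open>g \<noteq> h\<close> by blast
    qed
  qed
qed

definition corona_block :: "'b set \<Rightarrow> 'b set set \<Rightarrow> 'a \<Rightarrow> ('a + 'a \<times> 'b) set set" where
  "corona_block V2 E2 v = corona_copy v ` E2 \<union> corona_spoke v ` V2"

lemma corona_blocks_disjoint:
  assumes "{} \<notin> E2" and "v \<noteq> v'"
  shows "corona_block V2 E2 v \<inter> corona_block V2 E2 v' = {}"
proof -
  have "corona_copy v e \<noteq> corona_copy v' f" if e: "e \<in> E2" for e f
  proof
    obtain y where "y \<in> e" using e assms(1) by (metis all_not_in_conv)
    assume "corona_copy v e = corona_copy v' f"
    moreover have "Inr (v, y) \<in> corona_copy v e" using \<open>y \<in> e\<close> by blast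
    ultimately have "Inr (v, y) \<in> corona_copy v' f" by simp
    then show False using assms(2) by auto
  qed
  then show ?thesis unfolding corona_block_def using assms(2) by (auto simp: doubleton_eq_iff)
qed

lemma saturation_number_le_card_corona_block:
  fixes V2 :: "'b set" and E2 :: "'b set set" and v :: 'a
  assumes "finite V2" and "finite E2"
    and max: "maximal_matching (corona_E V1 E1 V2 E2) M" and "v \<in> V1"
  shows "saturation_number E2 \<le> card (M \<inter> corona_block V2 E2 v)"
proof -
  define A where "A = {e \<in> E2. corona_copy v e \<in> M}"
  define W where "W = {w \<in> V2. corona_spoke v w \<in> M}"
  have M: "matching (corona_E V1 E1 V2 E2) M"
    and blocked: "\<And>g. g \<in> corona_E V1 E1 V2 E2 - M \<Longrightarrow> g \<inter> \<Union>M \<noteq> {}"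
    using max unfolding maximal_matching_iff by blast+
  have disjM: "\<And>g h. g \<in> M \<Longrightarrow> h \<in> M \<Longrightarrow> g \<noteq> h \<Longrightarrow> g \<inter> h = {}"
    using M unfolding matching_def by auto
  have copy_eq_iff: "corona_copy v e = corona_copy v f \<longleftrightarrow> e = f" for e f
    by (rule inj_image_eq_iff) (simp add: inj_def)
  have inj_copy: "inj_on (corona_copy v) X" for X :: "'b set set"
    by (rule inj_onI) (simp add: copy_eq_iff)
  have inj_spoke: "inj_on (corona_spoke v) X" for X :: "'b set"
    by (rule inj_onI) (simp add: doubleton_eq_iff)
  have "matching E2 A"
    unfolding matching_def
  proof (intro conjI ballI impI)
    show "A \<subseteq> E2" unfolding A_def by blast
    fix e f assume "e \<in> A" "f \<in> A" "e \<noteq> f"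
    then have "corona_copy v e \<in> M" "corona_copy v f \<in> M" unfolding A_def by blast+
    moreover have "corona_copy v e \<noteq> corona_copy v f"
      using \<open>e \<noteq> f\<close> by (simp add: copy_eq_iff)
    ultimately have "corona_copy v e \<inter> corona_copy v f = {}" by (rule disjM)
    then show "e \<inter> f = {}" by blast
  qed
  moreover have "e \<inter> W \<noteq> {}" if e: "e \<in> E2 - A" and free: "e \<inter> \<Union>A = {}" for e
  proof -
    have "corona_copy v e \<in> corona_E V1 E1 V2 E2"
      using e \<open>v \<in> V1\<close> unfolding mem_corona_E by blast
    moreover have "corona_copy v e \<notin> M" using e unfolding A_def by blast
    ultimately have "corona_copy v e \<in> corona_E V1 E1 V2 E2 - M" by blast
    then obtain g y where g: "g \<in> M" "Inr (v, y) \<in> g" "y \<in> e"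
      using blocked by blast
    then have "g \<in> corona_E V1 E1 V2 E2" using M unfolding matching_def by blast
    then consider (copy) f where "f \<in> E2" "g = corona_copy v f" "y \<in> f"
      | (spoke) "y \<in> V2" "g = corona_spoke v y"
      using g(2) unfolding mem_corona_E by auto
    then show ?thesis
    proof cases
      case copy
      then have "f \<in> A" using g(1) unfolding A_def by blast
      then show ?thesis using free copy(3) g(3) by blast
    next
      case spoke
      then show ?thesis using g unfolding W_def by blast
    qed
  qed
  ultimately have "saturation_number E2 \<le> card A + card W"
    using assms(1,2) by (intro saturation_number_le_card_add_cover) (auto simp: W_def)
  also have "\<dots> = card (corona_copy v ` A) + card (corona_spoke v ` W)"
    by (simp only: card_image[OF inj_copy] card_image[OF inj_spoke])
  also have "\<dots> = card (corona_copy v ` A \<union> corona_spoke v ` W)"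
    using assms(1,2) by (intro card_Un_disjoint[symmetric]) (auto simp: A_def W_def)
  also have "\<dots> \<le> card (M \<inter> corona_block V2 E2 v)"
    using assms(1,2) by (intro card_mono) (auto simp: A_def W_def corona_block_def)
  finally show ?thesis .
qed

lemma saturation_number_corona_ge:
  assumes "finite V1" "finite E1" "finite V2" "finite E2" and "{} \<notin> E2"
  shows "card V1 * saturation_number E2 \<le> saturation_number (corona_E V1 E1 V2 E2)"
proof -
  have fin: "finite (corona_E V1 E1 V2 E2)" using assms(1-4) by (rule finite_corona_E)
  obtain M where M: "maximal_matching (corona_E V1 E1 V2 E2) M"
      "card M = saturation_number (corona_E V1 E1 V2 E2)"
    using saturation_number_attained[OF fin] by blast
  then have "finite M" using fin unfolding maximal_matching_def matching_def
    by (auto intro: finite_subset)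
  have "card V1 * saturation_number E2 = (\<Sum>v\<in>V1. saturation_number E2)" by simp
  also have "\<dots> \<le> (\<Sum>v\<in>V1. card (M \<inter> corona_block V2 E2 v))"
    using assms(3,4) M(1) by (intro sum_mono saturation_number_le_card_corona_block)
  also have "\<dots> = card (\<Union>v\<in>V1. M \<inter> corona_block V2 E2 v)"
  proof (rule card_UN_disjoint[symmetric])
    show "\<forall>v\<in>V1. \<forall>v'\<in>V1. v \<noteq> v' \<longrightarrow>
        (M \<inter> corona_block V2 E2 v) \<inter> (M \<inter> corona_block V2 E2 v') = {}"
    proof (intro ballI impI)
      fix v v' assume "v \<in> V1" "v' \<in> V1" "v \<noteq> v'"
      have "corona_block V2 E2 v \<inter> corona_block V2 E2 v' = {}"
        using \<open>{} \<notin> E2\<close> \<open>v \<noteq> v'\<close> by (rule corona_blocks_disjoint)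
      then show "(M \<inter> corona_block V2 E2 v) \<inter> (M \<inter> corona_block V2 E2 v') = {}" by blast
    qed
  qed (use \<open>finite V1\<close> \<open>finite M\<close> in auto)
  also have "\<dots> \<le> card M" using \<open>finite M\<close> by (intro card_mono) auto
  finally show ?thesis using M(2) by simp
qed

lemma saturation_number_corona_le:
  fixes V1 :: "'a set" and V2 :: "'b set"
  assumes G1: "simple_graph V1 E1" and "finite V2" and "finite E2"
  shows "saturation_number (corona_E V1 E1 V2 E2)
           \<le> card V1 * saturation_number E2 + matching_number E1
              + (card V1 - 2 * matching_number E1)"
proof -
  have "finite V1" and "finite E1"
    using G1 simple_graph_finite_edges[OF G1] unfolding simple_graph_def by blast+
  obtain M1 where M1: "maximal_matching E1 M1" "card M1 = matching_number E1"
    using maximum_matching_exists[OF \<open>finite E1\<close>] by blast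
  obtain S where S: "maximal_matching E2 S" "card S = saturation_number E2"
    using saturation_number_attained[OF \<open>finite E2\<close>] by blast
  have "matching E1 M1" and blocked1: "\<And>f. f \<in> E1 - M1 \<Longrightarrow> f \<inter> \<Union>M1 \<noteq> {}"
    using M1(1) unfolding maximal_matching_iff by blast+
  have "matching E2 S" and blocked2: "\<And>f. f \<in> E2 - S \<Longrightarrow> f \<inter> \<Union>S \<noteq> {}"
    using S(1) unfolding maximal_matching_iff by blast+
  have "finite M1" "finite S"
    using \<open>matching E1 M1\<close> \<open>matching E2 S\<close> \<open>finite E1\<close> \<open>finite E2\<close>
    unfolding matching_def by (auto intro: finite_subset)
  define I where "I = ((`) Inl ` M1 :: ('a + 'a \<times> 'b) set set)"
  define A where "A = I \<union> (\<Union>v\<in>V1. corona_copy v ` S)"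
  define U where "U = V1 - \<Union>M1"
  define W where "W = (Inl ` U :: ('a + 'a \<times> 'b) set)"
  have "matching (corona_E V1 E1 V2 E2) A"
    unfolding A_def I_def using \<open>matching E1 M1\<close> \<open>matching E2 S\<close> by (rule matching_corona_lift)
  moreover have "g \<inter> W \<noteq> {}"
    if g: "g \<in> corona_E V1 E1 V2 E2 - A" and free: "g \<inter> \<Union>A = {}" for g
  proof -
    consider (edge) f where "f \<in> E1" "g = Inl ` f"
      | (copy) v f where "v \<in> V1" "f \<in> E2" "g = corona_copy v f"
      | (spoke) v w where "v \<in> V1" "g = corona_spoke v w"
      using DiffD1[OF g] unfolding mem_corona_E by blast
    then show ?thesis
    proof cases
      case edge
      then have "f \<notin> M1" using g unfolding A_def I_def by blast
      then obtain x where "x \<in> f" "x \<in> \<Union>M1" using blocked1 edge(1) by blast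
      then have "Inl x \<in> g \<inter> \<Union>A" using edge(2) unfolding A_def I_def by blast
      then show ?thesis using free by blast
    next
      case copy
      then have "f \<notin> S" using g unfolding A_def I_def by blast
      then obtain x h where "x \<in> f" "x \<in> h" "h \<in> S" using blocked2 copy(2) by blast
      moreover have "corona_copy v h \<in> A" using \<open>h \<in> S\<close> copy(1) unfolding A_def by blast
      ultimately have "Inr (v, x) \<in> g \<inter> \<Union>A" using copy(3) by blast
      then show ?thesis using free by blast
    next
      case spoke
      then have "v \<notin> \<Union>M1" using free unfolding A_def I_def by blast
      then show ?thesis using spoke unfolding W_def U_def by blast
    qed
  qed
  ultimately have "saturation_number (corona_E V1 E1 V2 E2) \<le> card A + card W"
    using \<open>finite V1\<close> \<open>finite E1\<close> assms(2,3)
    by (intro saturation_number_le_card_add_cover finite_corona_E) (auto simp: W_def U_def)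
  moreover have "card A \<le> matching_number E1 + card V1 * saturation_number E2"
  proof -
    have "card A \<le> card I + card (\<Union>v\<in>V1. corona_copy v ` S)"
      unfolding A_def by (rule card_Un_le)
    also have "\<dots> \<le> card M1 + (\<Sum>v\<in>V1. card S)"
      using \<open>finite V1\<close> \<open>finite M1\<close> \<open>finite S\<close> unfolding I_def
      by (intro add_mono card_image_le card_UN_le[THEN order_trans] sum_mono) auto
    finally show ?thesis using M1(2) S(2) by simp
  qed
  moreover have "card W = card V1 - 2 * matching_number E1"
  proof -
    have "\<Union>M1 \<subseteq> V1"
      using \<open>matching E1 M1\<close> simple_graph_edgeD(1)[OF G1] unfolding matching_def by blast
    then have "card U = card V1 - card (\<Union>M1)"
      unfolding U_def using \<open>finite V1\<close> by (meson card_Diff_subset finite_subset)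
    then show ?thesis
      using card_Union_matching[OF G1 \<open>matching E1 M1\<close>] M1(2) unfolding W_def
      by (simp add: card_image)
  qed
  ultimately show ?thesis by linarith
qed

theorem corollary2p9:
  fixes V1 :: "'a set" and E1 :: "'a set set" and V2 :: "'b set" and E2 :: "'b set set"
    and n l :: nat
  assumes "simple_graph V1 E1" and "simple_graph V2 E2"
    and "n = card V1"
    and "l = n - 2 * matching_number E1"
  shows "n * saturation_number E2 \<le> saturation_number (corona_E V1 E1 V2 E2)
       \<and> saturation_number (corona_E V1 E1 V2 E2)
           \<le> n * saturation_number E2 + matching_number E1 + l"
proof
  have "finite V1" "finite E1" "finite V2" "finite E2"
    using assms(1,2) simple_graph_finite_edges unfolding simple_graph_def by blast+
  moreover have "{} \<notin> E2"
    using simple_graph_edgeD(2)[OF assms(2)] by fastforce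
  ultimately show "n * saturation_number E2 \<le> saturation_number (corona_E V1 E1 V2 E2)"
    unfolding assms(3) by (rule saturation_number_corona_ge)
  show "saturation_number (corona_E V1 E1 V2 E2)
          \<le> n * saturation_number E2 + matching_number E1 + l"
    unfolding assms(3,4) using assms(1) \<open>finite V2\<close> \<open>finite E2\<close>
    by (rule saturation_number_corona_le)
qed

end
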